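(* Let $\eta=\frac1{20}$ and for $a,b>0$ define $$U(a,b)=\eta\,\mathbb E_{x\sim\mathcal N(b,1)}\Big[\big(\tanh(ax)-\tfrac12\tanh''(ax)a^2+\tanh'(ax)ax\big)x\Big]-\eta\,\mathbb E_{x\sim\mathcal N(b,1)}[\tanh'(ax)a]-\eta a.$$ If $a\in[30,\tfrac43b]$, then $|U(a,b)|\le\frac{a+b}{10}$. *)

theory Defs
  imports "HOL-Probability.Probability"
begin

definition eta :: real where "eta = 1/20"

definition tanh1 :: "real \<Rightarrow> real" where "tanh1 = deriv (tanh :: real \<Rightarrow> real)"
definition tanh2 :: "real \<Rightarrow> real" where "tanh2 = deriv tanh1"

definition gauss_exp :: "real \<Rightarrow> (real \<Rightarrow> real) \<Rightarrow> real" where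
  "gauss_exp b f = (\<integral>x. normal_density b 1 x * f x \<partial>lborel)"

definition U :: "real \<Rightarrow> real \<Rightarrow> real" where
  "U a b = eta * gauss_exp b (\<lambda>x. (tanh (a*x) - 1/2 * tanh2 (a*x) * a^2 + tanh1 (a*x) * a * x) * x)
         - eta * gauss_exp b (\<lambda>x. tanh1 (a*x) * a)
         - eta * a"

end

theory Submission
  imports Defs
begin

(* Writing y = a x, the first integrand is (tanh y + y tanh' y) x - (a/2) y tanh'' y. Since
   |y| <= |sinh y|, we have |y| sech^2 y <= |tanh y| sech y, and with tanh^2 y = 1 - sech^2 y the
   bounds |tanh y + y tanh' y| <= 27/20 and |y tanh'' y| <= 9/10 become polynomial inequalities
   in sech y. So the first expectation is at most 27/20 E|x| + 9a/20, where
   E|x| <= b + 1/(2b) because 2b|x| <= (x - b)^2 + 2bx; the second lies in [0, a] because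
   0 <= tanh' <= 1. The hypotheses a >= 30 and 3a <= 4b absorb what is left into (a + b)/10. *)

lemma tanh1_eq: "tanh1 y = 1 - tanh y ^ 2"
  unfolding tanh1_def by (rule DERIV_imp_deriv) (auto intro!: derivative_eq_intros)

lemma tanh2_eq: "tanh2 y = - 2 * tanh y * (1 - tanh y ^ 2)"
proof -
  have "((\<lambda>y. 1 - tanh y ^ 2) has_field_derivative - 2 * tanh y * (1 - tanh y ^ 2)) (at y)"
    by (auto intro!: derivative_eq_intros)
  then show ?thesis
    unfolding tanh2_def tanh1_eq[abs_def] by (rule DERIV_imp_deriv)
qed

lemma tanh1_nonneg: "0 \<le> tanh1 y"
  and tanh1_le_1: "tanh1 y \<le> 1"
proof -
  have "\<bar>tanh y\<bar> \<le> 1"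
    using tanh_real_bounds[of y] by auto
  then show "0 \<le> tanh1 y" "tanh1 y \<le> 1"
    unfolding tanh1_eq by (simp_all add: abs_square_le_1)
qed

lemma abs_le_abs_sinh: "\<bar>x\<bar> \<le> \<bar>sinh x\<bar>" for x :: real
  using real_le_abs_sinh[of x] by (simp add: sinh_field_def exp_minus)

lemma tanh_sq_eq: "tanh x ^ 2 = 1 - (1 / cosh x) ^ 2" for x :: real
  unfolding tanh_def power_divide by (simp add: diff_divide_eq_iff sinh_square_eq)

lemma one_minus_sq_mult_one_plus_sq_le: "(1 - s^2) * (1 + s)^2 \<le> (27/16 :: real)"
proof -
  have "27/16 - (1 - s^2) * (1 + s)^2 = (s - 1/2)^2 * ((s + 3/2)^2 + 1/2)"
    by (simp add: algebra_simps power2_eq_square)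
  moreover have "0 \<le> (s - 1/2)^2 * ((s + 3/2)^2 + 1/2)"
    by simp
  ultimately show ?thesis
    by linarith
qed

lemma mult_one_minus_sq_le:
  fixes s :: real
  assumes "0 \<le> s"
  shows "s * (1 - s^2) \<le> 9/20"
proof -
  have "9/20 - s * (1 - s^2) = (s - 3/5)^2 * (s + 6/5) + 2/25 * s + 9/500"
    by (simp add: field_simps power2_eq_square)
  moreover have "0 \<le> (s - 3/5)^2 * (s + 6/5) + 2/25 * s + 9/500"
    using assms by simp
  ultimately show ?thesis
    by linarith
qed

lemma abs_mult_one_minus_tanh_sq_le:
  "\<bar>x\<bar> * (1 - tanh x ^ 2) \<le> \<bar>tanh x\<bar> * (1 / cosh x)" for x :: real
proof -
  have "\<bar>x\<bar> * (1 - tanh x ^ 2) = \<bar>x\<bar> / cosh x ^ 2"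
    by (simp add: tanh_sq_eq power_divide)
  also have "\<dots> \<le> \<bar>sinh x\<bar> / cosh x ^ 2"
    by (intro divide_right_mono abs_le_abs_sinh) simp
  also have "\<dots> = \<bar>tanh x\<bar> * (1 / cosh x)"
    by (simp add: tanh_def abs_divide power2_eq_square)
  finally show ?thesis .
qed

lemma abs_tanh_add_mult_tanh1_le: "\<bar>tanh y + y * tanh1 y\<bar> \<le> 27/20"
proof -
  define s where "s = 1 / cosh y"
  have "0 \<le> s"
    by (simp add: s_def)
  have tanh_sq: "tanh y ^ 2 = 1 - s ^ 2"
    unfolding s_def by (rule tanh_sq_eq)
  have "\<bar>tanh y + y * tanh1 y\<bar> \<le> \<bar>tanh y\<bar> + \<bar>y\<bar> * tanh1 y"
    using abs_triangle_ineq[of "tanh y" "y * tanh1 y"] tanh1_nonneg[of y] by (simp add: abs_mult)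
  also have "\<dots> \<le> \<bar>tanh y\<bar> * (1 + s)"
    using abs_mult_one_minus_tanh_sq_le[of y] by (simp add: tanh1_eq s_def algebra_simps)
  also have "\<dots> \<le> 27/20"
  proof (rule power2_le_imp_le)
    have "(\<bar>tanh y\<bar> * (1 + s)) ^ 2 = (1 - s ^ 2) * (1 + s) ^ 2"
      by (simp add: power_mult_distrib tanh_sq)
    also have "\<dots> \<le> 27/16"
      by (rule one_minus_sq_mult_one_plus_sq_le)
    finally show "(\<bar>tanh y\<bar> * (1 + s)) ^ 2 \<le> (27/20) ^ 2"
      by (rule order_trans) (simp add: power2_eq_square)
  qed simp
  finally show ?thesis .
qed

lemma abs_mult_tanh2_le: "\<bar>y * tanh2 y\<bar> \<le> 9/10"
proof -
  define s where "s = 1 / cosh y"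
  have "0 \<le> s"
    by (simp add: s_def)
  have tanh_sq: "tanh y ^ 2 = 1 - s ^ 2"
    unfolding s_def by (rule tanh_sq_eq)
  have "\<bar>y * tanh2 y\<bar> = 2 * \<bar>tanh y\<bar> * (\<bar>y\<bar> * (1 - tanh y ^ 2))"
    using tanh1_nonneg[of y] by (simp add: tanh2_eq abs_mult tanh1_eq[symmetric])
  also have "\<dots> \<le> 2 * \<bar>tanh y\<bar> * (\<bar>tanh y\<bar> * s)"
    using abs_mult_one_minus_tanh_sq_le[of y] by (intro mult_left_mono) (simp_all add: s_def)
  also have "\<dots> = 2 * (s * \<bar>tanh y\<bar> ^ 2)"
    by (simp add: power2_eq_square)
  also have "\<dots> = 2 * (s * (1 - s ^ 2))"
    by (simp add: tanh_sq)
  also have "\<dots> \<le> 9/10"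
    using mult_one_minus_sq_le[OF \<open>0 \<le> s\<close>] by simp
  finally show ?thesis .
qed

lemma abs_U_integrand_le:
  assumes "0 \<le> a"
  shows "\<bar>(tanh (a*x) - 1/2 * tanh2 (a*x) * a^2 + tanh1 (a*x) * a * x) * x\<bar>
           \<le> 27/20 * \<bar>x\<bar> + 9/20 * a"
proof -
  define y where "y = a * x"
  have "(tanh (a*x) - 1/2 * tanh2 (a*x) * a^2 + tanh1 (a*x) * a * x) * x
      = (tanh y + y * tanh1 y) * x - a/2 * (y * tanh2 y)"
    by (simp add: y_def algebra_simps power2_eq_square)
  also have "\<bar>\<dots>\<bar> \<le> \<bar>tanh y + y * tanh1 y\<bar> * \<bar>x\<bar> + a/2 * \<bar>y * tanh2 y\<bar>"
    using assms abs_triangle_ineq4[of "(tanh y + y * tanh1 y) * x" "a/2 * (y * tanh2 y)"]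
    by (simp add: abs_mult)
  also have "\<dots> \<le> 27/20 * \<bar>x\<bar> + a/2 * (9/10)"
    using assms abs_tanh_add_mult_tanh1_le[of y] abs_mult_tanh2_le[of y]
    by (intro add_mono mult_mono) simp_all
  finally show ?thesis
    by simp
qed

(* No integrability of f is needed: the Bochner integral of a non-integrable function is 0. *)
lemma abs_gauss_exp_le:
  assumes "integrable lborel (\<lambda>x. normal_density b 1 x * g x)" and "\<And>x. \<bar>f x\<bar> \<le> g x"
  shows "\<bar>gauss_exp b f\<bar> \<le> gauss_exp b g"
proof (cases "integrable lborel (\<lambda>x. normal_density b 1 x * f x)")
  case True
  then show ?thesis
    unfolding gauss_exp_def using assms
    by (intro integral_abs_bound_integral) (auto simp: abs_mult intro: mult_left_mono)
next
  case False
  have "0 \<le> gauss_exp b g"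
    unfolding gauss_exp_def using assms(2)
    by (intro integral_nonneg_AE AE_I2 mult_nonneg_nonneg normal_density_nonneg) (meson abs_ge_zero order_trans)
  then show ?thesis
    using False by (simp add: gauss_exp_def not_integrable_integral_eq)
qed

lemma gauss_exp_nonneg: "(\<And>x. 0 \<le> f x) \<Longrightarrow> 0 \<le> gauss_exp b f"
  unfolding gauss_exp_def by (intro integral_nonneg_AE AE_I2 mult_nonneg_nonneg normal_density_nonneg)

lemma gauss_exp_const: "gauss_exp b (\<lambda>_. c) = c"
  by (simp add: gauss_exp_def)

lemma gauss_exp_affine:
  assumes "integrable lborel (\<lambda>x. normal_density b 1 x * f x)"
  shows "gauss_exp b (\<lambda>x. c * f x + d) = c * gauss_exp b f + d"
  using assms by (simp add: gauss_exp_def distrib_left mult.left_commute)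

lemma integrable_normal_affine:
  assumes "integrable lborel (\<lambda>x. normal_density b 1 x * f x)"
  shows "integrable lborel (\<lambda>x. normal_density b 1 x * (c * f x + d))"
  using assms by (simp add: distrib_left mult.left_commute)

lemma integrable_normal_abs:
  "0 < \<sigma> \<Longrightarrow> integrable lborel (\<lambda>x. normal_density \<mu> \<sigma> x * \<bar>x\<bar>)"
  using integrable_abs[OF integrable_normal_moment_nz_1[where \<mu>=\<mu> and \<sigma>=\<sigma>]] by (simp add: abs_mult)

lemma gauss_exp_abs_le:
  assumes "0 < b"
  shows "gauss_exp b abs \<le> b + 1 / (2 * b)"
proof -
  let ?nd = "normal_density b 1"
  have "gauss_exp b abs \<le> (\<integral>x. ?nd x * ((x - b)^2 / (2 * b) + x) \<partial>lborel)"
    unfolding gauss_exp_def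
  proof (rule integral_mono)
    show "integrable lborel (\<lambda>x. ?nd x * ((x - b)^2 / (2 * b) + x))"
      using integrable_normal_moment[where \<mu>=b and \<sigma>=1 and k=2]
      integrable_normal_moment_nz_1[where \<mu>=b and \<sigma>=1]
      by (simp add: distrib_left)
    fix x
    have "2 * b * \<bar>x\<bar> \<le> (x - b)^2 + 2 * b * x"
      using zero_le_power2[of "\<bar>x\<bar> - b"] by (simp add: power2_eq_square algebra_simps abs_mult_self_eq)
    then have "\<bar>x\<bar> \<le> (x - b)^2 / (2 * b) + x"
      using assms by (simp add: field_simps)
    then show "?nd x * \<bar>x\<bar> \<le> ?nd x * ((x - b)^2 / (2 * b) + x)"
      by (simp add: mult_left_mono)
  qed (simp add: integrable_normal_abs)
  also have "\<dots> = 1 / (2 * b) + b"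
    using integrable_normal_moment[where \<mu>=b and \<sigma>=1 and k=2]
      integrable_normal_moment_nz_1[where \<mu>=b and \<sigma>=1]
      integral_normal_moment_even[where \<mu>=b and \<sigma>=1 and k=1]
      integral_normal_moment_nz_1[where \<mu>=b and \<sigma>=1]
    by (simp add: distrib_left)
  finally show ?thesis
    by simp
qed

lemma abs_gauss_exp_U_integrand_le:
  assumes "0 \<le> a" and "0 < b"
  shows "\<bar>gauss_exp b (\<lambda>x. (tanh (a*x) - 1/2 * tanh2 (a*x) * a^2 + tanh1 (a*x) * a * x) * x)\<bar>
           \<le> 27/20 * b + 27 / (40 * b) + 9/20 * a"
proof -
  have "\<bar>gauss_exp b (\<lambda>x. (tanh (a*x) - 1/2 * tanh2 (a*x) * a^2 + tanh1 (a*x) * a * x) * x)\<bar>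
          \<le> gauss_exp b (\<lambda>x. 27/20 * \<bar>x\<bar> + 9/20 * a)"
    using assms(1)
    by (intro abs_gauss_exp_le integrable_normal_affine integrable_normal_abs abs_U_integrand_le) simp
  also have "\<dots> = 27/20 * gauss_exp b abs + 9/20 * a"
    by (intro gauss_exp_affine integrable_normal_abs) simp
  also have "\<dots> \<le> 27/20 * (b + 1 / (2 * b)) + 9/20 * a"
    using gauss_exp_abs_le[OF assms(2)] by simp
  also have "\<dots> = 27/20 * b + 27 / (40 * b) + 9/20 * a"
    using assms(2) by (simp add: field_simps)
  finally show ?thesis .
qed

theorem lemmaF4:
  fixes a b :: real
  assumes "a > 0" and "b > 0" and "30 \<le> a" and "a \<le> 4/3 * b"
  shows "\<bar>U a b\<bar> \<le> (a + b) / 10"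
proof -
  let ?A = "gauss_exp b (\<lambda>x. (tanh (a*x) - 1/2 * tanh2 (a*x) * a^2 + tanh1 (a*x) * a * x) * x)"
  let ?B = "gauss_exp b (\<lambda>x. tanh1 (a*x) * a)"
  have U_eq: "U a b = (?A - ?B - a) / 20"
    by (simp add: U_def eta_def)
  have A: "\<bar>?A\<bar> \<le> 27/20 * b + 27 / (40 * b) + 9/20 * a"
    using assms(1,2) by (intro abs_gauss_exp_U_integrand_le) simp_all
  have B_nonneg: "0 \<le> ?B"
    using assms(1) by (intro gauss_exp_nonneg) (simp add: tanh1_nonneg)
  have B_le: "?B \<le> a"
  proof -
    have "\<bar>?B\<bar> \<le> gauss_exp b (\<lambda>_. a)"
      using assms(1) tanh1_nonneg tanh1_le_1 by (intro abs_gauss_exp_le) (simp_all add: abs_mult)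
    then show ?thesis
      by (simp add: gauss_exp_const)
  qed
  have b_large: "27 / (40 * b) \<le> b / 20"
  proof -
    have "(22::real) * 22 \<le> b * b"
      using assms by (intro mult_mono) simp_all
    then show ?thesis
      using assms(2) by (simp add: field_simps)
  qed
  have "\<bar>?A - ?B - a\<bar> \<le> 2 * a + 2 * b"
    using abs_le_D1[OF A] abs_le_D2[OF A] B_nonneg B_le b_large assms(4)
    by (intro abs_leI) linarith+
  then show ?thesis
    unfolding U_eq by simp
qed

end
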